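(* For each $n\in\mathbb{N}$ let $D_n=\{(x,y)\in[0,n]^2: x\le y\}$, let $G_n:D_n\to\mathbb{R}$ be continuous, and let $(\mathcal{M}_1(n),\mathcal{M}_2(n))\in D_n$ be a point at which $G_n$ attains its maximum. Let $T=\{(x,y)\in\mathbb{R}^2: 0\le x\le y\le 1\}$ and define $h_n:T\to\mathbb{R}$ by $h_n(x,y)=G_n(nx,ny)$. Assume that $h_n$ converges uniformly on $T$ to a function $h$ and that $(\theta_1,\theta_2)$ is the only global maximum point of $h$ on $T$. Then: (i) $\lim_{n\to\infty}\mathcal{M}_i(n)/n=\theta_i$ for $i=1,2$; (ii) $\lim_{n\to\infty}G_n(\mathcal{M}_1(n),\mathcal{M}_2(n))=h(\theta_1,\theta_2)$; (iii) if $(\mathfrak{M}_1(n),\mathfrak{M}_2(n))\in D_n$ satisfy $\mathfrak{M}_i(n)\sim\mathcal{M}_i(n)$ (i.e. $\mathfrak{M}_i(n)/\mathcal{M}_i(n)\to1$) for $i=1,2$, then $\lim_{n\to\infty}G_n(\mathfrak{M}_1(n),\mathfrak{M}_2(n))=h(\theta_1,\theta_2)$. *)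

theory Defs
  imports "HOL-Analysis.Analysis"
begin

definition Dn :: "nat \<Rightarrow> (real \<times> real) set" where
  "Dn n = {(x, y). 0 \<le> x \<and> x \<le> real n \<and> 0 \<le> y \<and> y \<le> real n \<and> x \<le> y}"

definition Tri :: "(real \<times> real) set" where
  "Tri = {(x, y). 0 \<le> x \<and> x \<le> y \<and> y \<le> 1}"

end

theory Submission
  imports Defs
begin

text \<open>Rescaling by \<open>1/n\<close> maps \<open>D\<^sub>n\<close> onto \<open>T\<close> and turns maximizers of \<open>G\<^sub>n\<close> into maximizers
  of \<open>h\<^sub>n\<close>. Uniform convergence forces the maximal values of \<open>h\<^sub>n\<close> to converge to \<open>max h\<close>, and
  by compactness of \<open>T\<close> a strict maximizer of the continuous limit \<open>h\<close> attracts every sequence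
  along which \<open>h\<close> approaches its maximum. Any sequence whose rescaling tends to \<open>\<theta>\<close>, in
  particular one asymptotically equivalent to the maximizers, then carries \<open>G\<^sub>n\<close> to \<open>h \<theta>\<close>.\<close>

lemma tendsto_strict_maximizer:
  fixes h :: "'a::topological_space \<Rightarrow> 'b::linorder_topology"
  assumes "compact K" and "continuous_on K h" and "\<theta> \<in> K"
    and strict: "\<And>p. p \<in> K \<Longrightarrow> p \<noteq> \<theta> \<Longrightarrow> h p < h \<theta>"
    and in_K: "\<forall>\<^sub>F n in F. P n \<in> K"
    and h_lim: "((\<lambda>n. h (P n)) \<longlongrightarrow> h \<theta>) F"
  shows "(P \<longlongrightarrow> \<theta>) F"
proof (rule topological_tendstoI)
  fix S assume "open S" "\<theta> \<in> S"
  show "\<forall>\<^sub>F n in F. P n \<in> S"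
  proof (cases "K - S = {}")
    case True
    with in_K show ?thesis by (auto elim: eventually_mono)
  next
    case False
    have "compact (K - S)" using \<open>compact K\<close> \<open>open S\<close> by (rule compact_diff)
    moreover have "continuous_on (K - S) h"
      using \<open>continuous_on K h\<close> by (rule continuous_on_subset) auto
    ultimately obtain x where x: "x \<in> K - S" and x_max: "\<And>y. y \<in> K - S \<Longrightarrow> h y \<le> h x"
      using continuous_attains_sup[of "K - S" h] False by auto
    have "h x < h \<theta>" using x \<open>\<theta> \<in> S\<close> by (intro strict) auto
    with h_lim have "\<forall>\<^sub>F n in F. h x < h (P n)" by (rule order_tendstoD)
    with in_K show ?thesis
    proof eventually_elim
      case (elim n)
      then have "P n \<notin> K - S" using x_max by (meson not_le)
      with elim show ?case by blast
    qed
  qed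
qed

lemma uniform_limit_along:
  fixes f :: "'i \<Rightarrow> 'a \<Rightarrow> 'b::metric_space"
  assumes "uniform_limit K f h F"
    and in_K: "\<forall>\<^sub>F n in F. P n \<in> K"
    and lim: "((\<lambda>n. h (P n)) \<longlongrightarrow> l) F"
  shows "((\<lambda>n. f n (P n)) \<longlongrightarrow> l) F"
proof (rule tendstoI)
  fix e :: real assume "e > 0"
  then have "e / 2 > 0" by simp
  from uniform_limitD[OF assms(1) this] in_K tendstoD[OF lim this]
  show "\<forall>\<^sub>F n in F. dist (f n (P n)) l < e"
  proof eventually_elim
    case (elim n)
    then have "dist (f n (P n)) (h (P n)) < e / 2" by blast
    with elim(3) dist_triangle[of "f n (P n)" l "h (P n)"] show ?case by linarith
  qed
qed

lemma uniform_limit_maximizer_values: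
  fixes f :: "'i \<Rightarrow> 'a \<Rightarrow> real"
  assumes "uniform_limit K f h F" and "\<theta> \<in> K"
    and \<theta>_max: "\<And>q. q \<in> K \<Longrightarrow> h q \<le> h \<theta>"
    and maximizer: "\<forall>\<^sub>F n in F. p n \<in> K \<and> (\<forall>q\<in>K. f n q \<le> f n (p n))"
  shows "((\<lambda>n. h (p n)) \<longlongrightarrow> h \<theta>) F"
proof (rule tendstoI)
  fix e :: real assume "e > 0"
  then have "e / 2 > 0" by simp
  from uniform_limitD[OF assms(1) this] maximizer
  show "\<forall>\<^sub>F n in F. dist (h (p n)) (h \<theta>) < e"
  proof eventually_elim
    case (elim n)
    then have "\<bar>f n (p n) - h (p n)\<bar> < e / 2" "\<bar>f n \<theta> - h \<theta>\<bar> < e / 2"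
        "f n \<theta> \<le> f n (p n)" "h (p n) \<le> h \<theta>"
      using \<open>\<theta> \<in> K\<close> \<theta>_max by (auto simp: dist_real_def)
    then show ?case unfolding dist_real_def abs_less_iff by linarith
  qed
qed

lemma tendsto_ratio_transfer:
  fixes a b c :: "'i \<Rightarrow> real"
  assumes ab: "((\<lambda>n. a n / b n) \<longlongrightarrow> 1) F" and bc: "((\<lambda>n. b n / c n) \<longlongrightarrow> t) F"
  shows "((\<lambda>n. a n / c n) \<longlongrightarrow> t) F"
proof -
  have "((\<lambda>n. a n / b n * (b n / c n)) \<longlongrightarrow> t) F"
    using tendsto_mult[OF ab bc] by simp
  moreover have "\<forall>\<^sub>F n in F. a n / b n * (b n / c n) = a n / c n"
    using order_tendstoD(1)[OF ab zero_less_one] by eventually_elim auto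
  ultimately show ?thesis by (rule Lim_transform_eventually)
qed

definition rescale :: "nat \<Rightarrow> real \<times> real \<Rightarrow> real \<times> real" where
  "rescale n q = (fst q / real n, snd q / real n)"

lemma compact_Tri: "compact Tri"
proof -
  have "Tri = ({0..1} \<times> {0..1}) \<inter> {p. fst p \<le> snd p}"
    by (auto simp: Tri_def)
  also have "compact \<dots>"
    by (rule compact_Int_closed) (auto intro!: compact_Times closed_Collect_le continuous_intros)
  finally show ?thesis .
qed

lemma scaled_Tri_in_Dn: "p \<in> Tri \<Longrightarrow> (real n * fst p, real n * snd p) \<in> Dn n"
  by (auto simp: Tri_def Dn_def mult_left_mono intro: mult_left_le)

lemma rescale_in_Tri: "n > 0 \<Longrightarrow> q \<in> Dn n \<Longrightarrow> rescale n q \<in> Tri"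
  by (auto simp: rescale_def Tri_def Dn_def divide_le_eq_1 divide_right_mono)

lemma eventually_rescale_in_Tri:
  assumes "\<And>n. R n \<in> Dn n"
  shows "\<forall>\<^sub>F n in sequentially. rescale n (R n) \<in> Tri"
  using eventually_gt_at_top[of 0] by eventually_elim (simp add: rescale_in_Tri assms)

lemma eventually_unscale_rescale:
  "\<forall>\<^sub>F n in sequentially. G n (real n * fst (rescale n (R n)), real n * snd (rescale n (R n))) = G n (R n)"
  using eventually_gt_at_top[of 0] by eventually_elim (simp add: rescale_def)

lemma continuous_on_uniform_limit_rescaled:
  assumes "\<And>n. continuous_on (Dn n) (G n)"
    and "uniform_limit Tri (\<lambda>n p. G n (real n * fst p, real n * snd p)) h sequentially"
  shows "continuous_on Tri h"
proof (rule uniform_limit_theorem[OF _ assms(2)])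
  have "continuous_on Tri (\<lambda>p. G n (real n * fst p, real n * snd p))" for n
    by (rule continuous_on_compose2[OF assms(1)])
      (auto intro!: continuous_intros scaled_Tri_in_Dn)
  then show "\<forall>\<^sub>F n in sequentially. continuous_on Tri (\<lambda>p. G n (real n * fst p, real n * snd p))"
    by simp
qed simp

lemma tendsto_uniform_limit_rescaled:
  assumes unif: "uniform_limit Tri (\<lambda>n p. G n (real n * fst p, real n * snd p)) h sequentially"
    and "continuous_on Tri h" and "\<theta> \<in> Tri"
    and R_in: "\<And>n. R n \<in> Dn n" and R_lim: "(\<lambda>n. rescale n (R n)) \<longlonglongrightarrow> \<theta>"
  shows "(\<lambda>n. G n (R n)) \<longlonglongrightarrow> h \<theta>"
proof -
  have "(\<lambda>n. h (rescale n (R n))) \<longlonglongrightarrow> h \<theta>"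
    using assms(2) R_lim assms(3) eventually_rescale_in_Tri[OF R_in]
    by (rule continuous_on_tendsto_compose)
  with unif eventually_rescale_in_Tri[OF R_in]
  have "(\<lambda>n. G n (real n * fst (rescale n (R n)), real n * snd (rescale n (R n)))) \<longlonglongrightarrow> h \<theta>"
    by (rule uniform_limit_along)
  then show ?thesis
    using eventually_unscale_rescale by (rule Lim_transform_eventually)
qed

lemma tendsto_rescaled_maximizers:
  fixes G :: "nat \<Rightarrow> real \<times> real \<Rightarrow> real"
  assumes unif: "uniform_limit Tri (\<lambda>n p. G n (real n * fst p, real n * snd p)) h sequentially"
    and "continuous_on Tri h" and "\<theta> \<in> Tri"
    and \<theta>_strict: "\<And>p. p \<in> Tri \<Longrightarrow> p \<noteq> \<theta> \<Longrightarrow> h p < h \<theta>"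
    and M_in: "\<And>n. M n \<in> Dn n" and M_max: "\<And>n p. p \<in> Dn n \<Longrightarrow> G n p \<le> G n (M n)"
  shows "(\<lambda>n. rescale n (M n)) \<longlonglongrightarrow> \<theta>"
proof -
  let ?g = "\<lambda>n q. G n (real n * fst q, real n * snd q)"
  have maximizer:
    "\<forall>\<^sub>F n in sequentially. rescale n (M n) \<in> Tri \<and> (\<forall>q\<in>Tri. ?g n q \<le> ?g n (rescale n (M n)))"
    using eventually_rescale_in_Tri[OF M_in] eventually_unscale_rescale[of G M]
    by eventually_elim (auto intro: M_max scaled_Tri_in_Dn)
  have "h q \<le> h \<theta>" if "q \<in> Tri" for q
    using \<theta>_strict[OF that] by (cases "q = \<theta>") auto
  with unif \<open>\<theta> \<in> Tri\<close> have "(\<lambda>n. h (rescale n (M n))) \<longlonglongrightarrow> h \<theta>"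
    using maximizer by (rule uniform_limit_maximizer_values)
  with compact_Tri assms(2,3) \<theta>_strict eventually_rescale_in_Tri[OF M_in]
  show ?thesis by (rule tendsto_strict_maximizer)
qed

theorem proposition2:
  fixes G :: "nat \<Rightarrow> real \<times> real \<Rightarrow> real"
    and M :: "nat \<Rightarrow> real \<times> real"
    and h :: "real \<times> real \<Rightarrow> real"
    and \<theta> :: "real \<times> real"
  assumes G_cont: "\<And>n. continuous_on (Dn n) (G n)"
    and M_in: "\<And>n. M n \<in> Dn n"
    and M_max: "\<And>n p. p \<in> Dn n \<Longrightarrow> G n p \<le> G n (M n)"
    and unif: "uniform_limit Tri (\<lambda>n p. G n (real n * fst p, real n * snd p)) h sequentially"
    and \<theta>_in: "\<theta> \<in> Tri"
    and \<theta>_max: "\<And>p. p \<in> Tri \<Longrightarrow> h p \<le> h \<theta>"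
    and \<theta>_unique: "\<And>p. p \<in> Tri \<Longrightarrow> h p = h \<theta> \<Longrightarrow> p = \<theta>"
  shows "((\<lambda>n. fst (M n) / real n) \<longlonglongrightarrow> fst \<theta>) \<and>
         ((\<lambda>n. snd (M n) / real n) \<longlonglongrightarrow> snd \<theta>) \<and>
         ((\<lambda>n. G n (M n)) \<longlonglongrightarrow> h \<theta>) \<and>
         (\<forall>M'. (\<forall>n. M' n \<in> Dn n) \<longrightarrow>
            ((\<lambda>n. fst (M' n) / fst (M n)) \<longlonglongrightarrow> 1) \<longrightarrow>
            ((\<lambda>n. snd (M' n) / snd (M n)) \<longlonglongrightarrow> 1) \<longrightarrow>
            ((\<lambda>n. G n (M' n)) \<longlonglongrightarrow> h \<theta>))"
proof -
  have h_cont: "continuous_on Tri h"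
    using G_cont unif by (rule continuous_on_uniform_limit_rescaled)
  have M_lim: "(\<lambda>n. rescale n (M n)) \<longlonglongrightarrow> \<theta>"
    using unif h_cont \<theta>_in _ M_in M_max
    by (rule tendsto_rescaled_maximizers) (metis \<theta>_max \<theta>_unique order_less_le)
  have M1: "(\<lambda>n. fst (M n) / real n) \<longlonglongrightarrow> fst \<theta>"
    and M2: "(\<lambda>n. snd (M n) / real n) \<longlonglongrightarrow> snd \<theta>"
    using tendsto_fst[OF M_lim] tendsto_snd[OF M_lim] by (simp_all add: rescale_def)
  have "(\<lambda>n. G n (M' n)) \<longlonglongrightarrow> h \<theta>"
    if M'_in: "\<forall>n. M' n \<in> Dn n" and "(\<lambda>n. fst (M' n) / fst (M n)) \<longlonglongrightarrow> 1"
      and "(\<lambda>n. snd (M' n) / snd (M n)) \<longlonglongrightarrow> 1" for M'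
  proof (rule tendsto_uniform_limit_rescaled[OF unif h_cont \<theta>_in])
    have "(\<lambda>n. rescale n (M' n)) \<longlonglongrightarrow> (fst \<theta>, snd \<theta>)"
      unfolding rescale_def using that
      by (intro tendsto_Pair tendsto_ratio_transfer[OF _ M1] tendsto_ratio_transfer[OF _ M2]) auto
    then show "(\<lambda>n. rescale n (M' n)) \<longlonglongrightarrow> \<theta>" by simp
  qed (use M'_in in blast)
  moreover have "(\<lambda>n. G n (M n)) \<longlonglongrightarrow> h \<theta>"
    using unif h_cont \<theta>_in M_in M_lim by (rule tendsto_uniform_limit_rescaled)
  ultimately show ?thesis using M1 M2 by blast
qed

end
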